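(* Let $H=(V,E,w)$ be a hypergraph and let $L,R\subset V$ be disjoint sets with $\mathrm{vol}(L\cup R)>0$. Then $$\gamma_1\le 2\beta_H(L,R),$$ where $\gamma_1=\min\{D(f): f\in\mathbb{R}^n,\ \sum_{v}\deg(v)f(v)^2>0\}$ and $D(f)=\frac{\sum_{e\in E}w(e)\big(\max_{u\in e}f(u)+\min_{v\in e}f(v)\big)^2}{\sum_{v\in V}\deg(v)f(v)^2}$.
   Context: A hypergraph $H=(V,E,w)$ has vertex set $V$ with $|V|=n$, hyperedges $E$ (subsets of $V$), weights $w:E\to\mathbb{R}_{>0}$; $\deg(v)=\sum_{e\ni v}w(e)$, $\mathrm{vol}(S)=\sum_{v\in S}\deg(v)$. For $A,B,C\subseteq V$, $w(A,B\mid C)=\sum_{e\in E}w(e)[e\cap A\ne\emptyset\wedge e\cap B\ne\emptyset\wedge e\cap C=\emptyset]$ and $w(A\mid C)=w(A,A\mid C)$. Writing $\overline{X}=V\setminus X$, the bipartiteness ratio of disjoint $L,R$ is $\beta_H(L,R)=\frac{2w(L\mid\overline{L})+2w(R\mid\overline{R})+w(L,\overline{L\cup R}\mid R)+w(R,\overline{L\cup R}\mid L)}{\mathrm{vol}(L\cup R)}$. The quantity $\gamma_1$ is the smallest eigenvalue of the paper's hypergraph operator $D_H^{-1}J_H$. *)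

theory Defs
  imports "HOL-Analysis.Analysis"
begin

definition hypergraph :: "'a set \<Rightarrow> 'a set set \<Rightarrow> ('a set \<Rightarrow> real) \<Rightarrow> bool" where
  "hypergraph V E w \<longleftrightarrow> finite V \<and> finite E \<and> (\<forall>e\<in>E. e \<subseteq> V \<and> e \<noteq> {}) \<and> (\<forall>e\<in>E. w e > 0)"

definition hdeg :: "'a set set \<Rightarrow> ('a set \<Rightarrow> real) \<Rightarrow> 'a \<Rightarrow> real" where
  "hdeg E w v = (\<Sum>e\<in>{e\<in>E. v \<in> e}. w e)"

definition hvol :: "'a set set \<Rightarrow> ('a set \<Rightarrow> real) \<Rightarrow> 'a set \<Rightarrow> real" where
  "hvol E w S = (\<Sum>v\<in>S. hdeg E w v)"

definition hw :: "'a set set \<Rightarrow> ('a set \<Rightarrow> real) \<Rightarrow> 'a set \<Rightarrow> 'a set \<Rightarrow> 'a set \<Rightarrow> real" where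
  "hw E w A B C = (\<Sum>e\<in>{e\<in>E. e \<inter> A \<noteq> {} \<and> e \<inter> B \<noteq> {} \<and> e \<inter> C = {}}. w e)"

definition bip_ratio :: "'a set \<Rightarrow> 'a set set \<Rightarrow> ('a set \<Rightarrow> real) \<Rightarrow> 'a set \<Rightarrow> 'a set \<Rightarrow> real" where
  "bip_ratio V E w L R =
     (2 * hw E w L L (V - L) + 2 * hw E w R R (V - R)
      + hw E w L (V - (L \<union> R)) R + hw E w R (V - (L \<union> R)) L) / hvol E w (L \<union> R)"

definition Dq :: "'a set \<Rightarrow> 'a set set \<Rightarrow> ('a set \<Rightarrow> real) \<Rightarrow> ('a \<Rightarrow> real) \<Rightarrow> real" where
  "Dq V E w f =
     (\<Sum>e\<in>E. w e * (Max (f ` e) + Min (f ` e))\<^sup>2) / (\<Sum>v\<in>V. hdeg E w v * (f v)\<^sup>2)"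

definition gamma1 :: "'a set \<Rightarrow> 'a set set \<Rightarrow> ('a set \<Rightarrow> real) \<Rightarrow> real" where
  "gamma1 V E w = Inf {Dq V E w f | f. (\<Sum>v\<in>V. hdeg E w v * (f v)\<^sup>2) > 0}"

end

theory Submission
  imports Defs
begin

text \<open>Test the quotient at the vector f that is 1 on L, -1 on R and 0 elsewhere. Its
  denominator is vol(L \<union> R). An edge contributes (max f + min f)^2 = 0 unless it lies
  inside L or inside R (contribution 4) or meets exactly one of L, R and also V - (L \<union> R)
  (contribution 1); so the numerator is at most twice the numerator of \<beta>_H(L,R).
  Finally \<gamma>_1 is the infimum of a set of nonnegative numbers containing D(f).\<close>

definition signed_indicator :: "'a set \<Rightarrow> 'a set \<Rightarrow> 'a \<Rightarrow> real" where
  "signed_indicator L R v = (if v \<in> L then 1 else if v \<in> R then -1 else 0)"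

definition hw_indicator :: "'a set \<Rightarrow> 'a set \<Rightarrow> 'a set \<Rightarrow> 'a set \<Rightarrow> real" where
  "hw_indicator A B C e = of_bool (e \<inter> A \<noteq> {} \<and> e \<inter> B \<noteq> {} \<and> e \<inter> C = {})"

lemma hw_eq_sum_hw_indicator:
  assumes "finite E"
  shows "hw E w A B C = (\<Sum>e\<in>E. w e * hw_indicator A B C e)"
  unfolding hw_def hw_indicator_def
  by (simp add: sum.inter_filter assms sum.inter_restrict if_distrib cong: if_cong)

lemma Max_signed_indicator_image:
  assumes "finite e" "e \<noteq> {}" "L \<inter> R = {}"
  shows "Max (signed_indicator L R ` e) = (if e \<inter> L \<noteq> {} then 1 else if e \<subseteq> R then -1 else 0)"
proof (rule Max_eqI)
  show "(if e \<inter> L \<noteq> {} then 1 else if e \<subseteq> R then -1 else 0) \<in> signed_indicator L R ` e"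
    using assms by (auto simp: signed_indicator_def image_iff)
qed (use assms in \<open>auto simp: signed_indicator_def\<close>)

lemma Min_signed_indicator_image:
  assumes "finite e" "e \<noteq> {}" "L \<inter> R = {}"
  shows "Min (signed_indicator L R ` e) = (if e \<inter> R \<noteq> {} then -1 else if e \<subseteq> L then 1 else 0)"
proof (rule Min_eqI)
  show "(if e \<inter> R \<noteq> {} then -1 else if e \<subseteq> L then 1 else 0) \<in> signed_indicator L R ` e"
    using assms by (auto simp: signed_indicator_def image_iff)
qed (use assms in \<open>auto simp: signed_indicator_def\<close>)

lemma edge_term_signed_indicator_le:
  assumes "e \<subseteq> V" "finite e" "e \<noteq> {}" "L \<inter> R = {}"
  shows "(Max (signed_indicator L R ` e) + Min (signed_indicator L R ` e))\<^sup>2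
    \<le> 2 * (2 * hw_indicator L L (V - L) e + 2 * hw_indicator R R (V - R) e
      + hw_indicator L (V - (L \<union> R)) R e + hw_indicator R (V - (L \<union> R)) L e)"
  using assms
  by (auto simp: Max_signed_indicator_image Min_signed_indicator_image hw_indicator_def)

lemma sum_hdeg_signed_indicator_sq:
  assumes "finite V" "L \<subseteq> V" "R \<subseteq> V"
  shows "(\<Sum>v\<in>V. hdeg E w v * (signed_indicator L R v)\<^sup>2) = hvol E w (L \<union> R)"
proof -
  have "(\<Sum>v\<in>V. hdeg E w v * (signed_indicator L R v)\<^sup>2)
      = (\<Sum>v\<in>V. if v \<in> L \<union> R then hdeg E w v else 0)"
    by (rule sum.cong) (auto simp: signed_indicator_def)
  also have "\<dots> = (\<Sum>v\<in>V \<inter> (L \<union> R). hdeg E w v)"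
    using assms(1) by (simp add: sum.inter_restrict)
  also have "V \<inter> (L \<union> R) = L \<union> R"
    using assms(2,3) by auto
  finally show ?thesis unfolding hvol_def .
qed

lemma Dq_nonneg:
  assumes "\<And>e. e \<in> E \<Longrightarrow> w e \<ge> 0"
  shows "Dq V E w f \<ge> 0"
proof -
  have "(\<Sum>v\<in>V. hdeg E w v * (f v)\<^sup>2) \<ge> 0"
    using assms by (intro sum_nonneg mult_nonneg_nonneg) (auto simp: hdeg_def intro: sum_nonneg)
  moreover have "(\<Sum>e\<in>E. w e * (Max (f ` e) + Min (f ` e))\<^sup>2) \<ge> 0"
    using assms by (intro sum_nonneg) simp
  ultimately show ?thesis unfolding Dq_def by simp
qed

lemma gamma1_le_Dq:
  assumes "\<And>e. e \<in> E \<Longrightarrow> w e \<ge> 0" "(\<Sum>v\<in>V. hdeg E w v * (f v)\<^sup>2) > 0"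
  shows "gamma1 V E w \<le> Dq V E w f"
  unfolding gamma1_def
proof (rule cInf_lower)
  show "bdd_below {Dq V E w f |f. 0 < (\<Sum>v\<in>V. hdeg E w v * (f v)\<^sup>2)}"
    using Dq_nonneg[where E = E and w = w and V = V] assms(1)
    by (auto intro!: bdd_belowI[of _ 0])
qed (use assms(2) in auto)

theorem lemma13:
  fixes V :: "'a set" and E :: "'a set set" and w :: "'a set \<Rightarrow> real" and L R :: "'a set"
  assumes "hypergraph V E w"
    and "L \<subseteq> V" and "R \<subseteq> V" and "L \<inter> R = {}"
    and "hvol E w (L \<union> R) > 0"
  shows "gamma1 V E w \<le> 2 * bip_ratio V E w L R"
proof -
  let ?f = "signed_indicator L R"
  have V: "finite V" and E: "finite E" and edges: "\<And>e. e \<in> E \<Longrightarrow> e \<subseteq> V \<and> e \<noteq> {}"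
    and weights: "\<And>e. e \<in> E \<Longrightarrow> w e > 0"
    using assms(1) unfolding hypergraph_def by auto
  have den: "(\<Sum>v\<in>V. hdeg E w v * (?f v)\<^sup>2) = hvol E w (L \<union> R)"
    using sum_hdeg_signed_indicator_sq[OF V assms(2,3)] .
  have "(\<Sum>e\<in>E. w e * (Max (?f ` e) + Min (?f ` e))\<^sup>2)
      \<le> (\<Sum>e\<in>E. w e * (2 * (2 * hw_indicator L L (V - L) e + 2 * hw_indicator R R (V - R) e
          + hw_indicator L (V - (L \<union> R)) R e + hw_indicator R (V - (L \<union> R)) L e)))"
    using edges weights V assms(4)
    by (intro sum_mono mult_left_mono edge_term_signed_indicator_le)
      (auto intro: finite_subset less_imp_le)
  also have "\<dots> = 2 * (2 * hw E w L L (V - L) + 2 * hw E w R R (V - R)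
      + hw E w L (V - (L \<union> R)) R + hw E w R (V - (L \<union> R)) L)"
    by (simp add: hw_eq_sum_hw_indicator[OF E] sum.distrib sum_distrib_left algebra_simps)
  finally have "Dq V E w ?f \<le> 2 * bip_ratio V E w L R"
    unfolding Dq_def bip_ratio_def den using assms(5) by (simp add: divide_right_mono)
  moreover have "gamma1 V E w \<le> Dq V E w ?f"
    using weights assms(5) den by (intro gamma1_le_Dq) (auto intro: less_imp_le)
  ultimately show ?thesis by linarith
qed

end
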